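(* Let $K$ be a sequence of positive integers with $K_n=ab^n(1+o(1))$ as $n\to\infty$, where $a,b$ are positive real numbers such that $\log_\phi b$ is irrational. Then for every integer $s\ge 2$ and every $\mathbf b\in\mathcal{F}_s$, $$\lim_{n\to\infty}\frac{\#\{k\le n:\mathrm{LB}_s(K_k)=\mathbf b\}}{n}=\log_\phi\frac{\widetilde{\mathbf b}\cdot\widehat F}{\mathbf b\cdot\widehat F}.$$
   Context: $F$: $F_1=1,F_2=2,F_{n+2}=F_{n+1}+F_n$. Every positive integer $m$ has a unique Zeckendorf expansion $m=\sum_{k=1}^M\epsilon(k)F_{M-k+1}$ with $\epsilon(k)\in\{0,1\}$, $\epsilon(1)=1$, $\epsilon(k)\epsilon(k+1)=0$; $\mathrm{LB}_s(m):=(\epsilon(1),\dots,\epsilon(s))$ if $M\ge s$ (undefined otherwise). For $s\ge2$, $\mathcal{F}_s$ is the finite set of all tuples $\mathrm{LB}_s(m)$, $m\in\mathbb{N}$ (equivalently, 0/1 tuples of length $s$ starting with $1$ with no two consecutive $1$'s), listed as $\mathbf b_1,\dots,\mathbf b_\ell$ so that $1+\mathbf b_k*F=\mathbf b_{k+1}*F$ for $k\le\ell-1$, where $\mathbf b*F:=\sum_{k=1}^s\mathbf b(k)F_{s-k+1}$. Define $\mathbf b_{\ell+1}:=(1,0,1,0,\dots,1,0,1,1)$ if $s$ is even and $\mathbf b_{\ell+1}:=(1,0,1,0,\dots,1,0,1,1,0)$ if $s$ is odd (length $s$), and for $\mathbf b=\mathbf b_k$ set $\widetilde{\mathbf b}:=\mathbf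 b_{k+1}$. $\phi$ is the golden ratio, $\omega=\phi^{-1}$, and $\mathbf b\cdot\widehat F:=\sum_{k=1}^s\mathbf b(k)\omega^{k-1}$. *)

theory Defs
  imports Complex_Main
begin

text \<open>Fibonacci numbers with F 1 = 1, F 2 = 2 (F 0 = 1 is an auxiliary value, never used).\<close>
fun zF :: "nat \<Rightarrow> nat" where
  "zF 0 = 1"
| "zF (Suc 0) = 1"
| "zF (Suc (Suc n)) = zF (Suc n) + zF n"

definition zval :: "nat list \<Rightarrow> nat" where
  "zval eps = (\<Sum>k=1..length eps. eps ! (k - 1) * zF (length eps - k + 1))"

definition is_zeck :: "nat list \<Rightarrow> nat \<Rightarrow> bool" where
  "is_zeck eps m \<longleftrightarrow> eps \<noteq> [] \<and> hd eps = 1 \<and> set eps \<subseteq> {0, 1}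
     \<and> (\<forall>i. Suc i < length eps \<longrightarrow> eps ! i * eps ! Suc i = 0) \<and> zval eps = m"

definition zeck :: "nat \<Rightarrow> nat list" where
  "zeck m = (THE eps. is_zeck eps m)"

definition LB :: "nat \<Rightarrow> nat \<Rightarrow> nat list option" where
  "LB s m = (if s \<le> length (zeck m) then Some (take s (zeck m)) else None)"

definition Fs :: "nat \<Rightarrow> nat list set" where
  "Fs s = {bs. \<exists>m>0. LB s m = Some bs}"

definition last_succ :: "nat \<Rightarrow> nat list" where
  "last_succ s = (if even s then concat (replicate ((s - 2) div 2) [1, 0]) @ [1, 1]
                  else concat (replicate ((s - 3) div 2) [1, 0]) @ [1, 1, 0])"

definition succ_block :: "nat \<Rightarrow> nat list \<Rightarrow> nat list" where
  "succ_block s bs = (if \<exists>c\<in>Fs s. zval c = zval bs + 1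
     then (THE c. c \<in> Fs s \<and> zval c = zval bs + 1) else last_succ s)"

definition phi :: real where
  "phi = (1 + sqrt 5) / 2"

definition omega :: real where
  "omega = 1 / phi"

text \<open>b . F-hat = sum_k b(k) omega^(k-1).\<close>
definition dotw :: "nat list \<Rightarrow> real" where
  "dotw bs = (\<Sum>k=1..length bs. real (bs ! (k - 1)) * omega ^ (k - 1))"

end

theory Submission
  imports Defs "HOL-Analysis.Kronecker_Approximation_Theorem"
begin

text \<open>
  Write the Zeckendorf expansion of m as the block bs followed by N further digits. Since
  F_n = phi^(n+1)/sqrt 5 + O(1), a digit string c padded with N zeros has value
  phi^(|c|+N+1)/sqrt 5 times the weight c . F-hat, up to an error |c|; and LB_s(m) = bs holds
  exactly when m lies between the padded values of bs and of its successor. Taking logarithms,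
  for large m this says that log_phi m, shifted by a constant depending on s, lies modulo 1 in a
  window of length log_phi of the ratio of the two weights, up to an error that vanishes as m
  grows. For m = K_k we have log_phi K_k = k log_phi b + const + o(1), and since log_phi b is
  irrational the rotation k log_phi b is equidistributed modulo 1 (which follows from
  Kronecker's theorem by a telescoping count of floors). Hence the density of these k is the
  window length.
\<close>

section \<open>Zeckendorf digit strings\<close>

fun admissible :: "nat list \<Rightarrow> bool" where
  "admissible [] = True"
| "admissible [x] = (x \<le> 1)"
| "admissible (x # y # xs) = (x \<le> 1 \<and> (x = 0 \<or> y = 0) \<and> admissible (y # xs))"

lemma admissible_iff:
  "admissible xs \<longleftrightarrow> set xs \<subseteq> {0, 1} \<and> (\<forall>i. Suc i < length xs \<longrightarrow> xs ! i * xs ! Suc i = 0)"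
proof (induction xs rule: admissible.induct)
  case (3 x y xs)
  have "(\<forall>i. Suc i < length (x # y # xs) \<longrightarrow> (x # y # xs) ! i * (x # y # xs) ! Suc i = 0)
      \<longleftrightarrow> x * y = 0 \<and> (\<forall>i. Suc i < length (y # xs) \<longrightarrow> (y # xs) ! i * (y # xs) ! Suc i = 0)"
    (is "?L \<longleftrightarrow> _")
  proof
    assume ?L
    then show "x * y = 0 \<and> (\<forall>i. Suc i < length (y # xs) \<longrightarrow> (y # xs) ! i * (y # xs) ! Suc i = 0)"
      by (metis Suc_less_eq length_Cons nth_Cons_0 nth_Cons_Suc zero_less_Suc)
  qed (auto simp: nth_Cons split: nat.split)
  then show ?case
    using 3 by auto
qed auto

lemma admissible_ConsD: "admissible (x # xs) \<Longrightarrow> admissible xs"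
  by (cases xs) auto

lemma admissible_digit_le_1: "admissible xs \<Longrightarrow> x \<in> set xs \<Longrightarrow> x \<le> 1"
  by (auto simp: admissible_iff)

lemma admissible_appendD: "admissible (u @ v) \<Longrightarrow> admissible u \<and> admissible v"
proof (induction u rule: admissible.induct)
  case (2 x)
  then show ?case by (cases v) auto
qed auto

lemma admissible_replicate_0: "admissible (replicate N 0)"
proof (induction N)
  case (Suc N)
  then show ?case by (cases N) auto
qed simp

lemma admissible_append_zeros: "admissible c \<Longrightarrow> admissible (c @ replicate N 0)"
proof (induction c rule: admissible.induct)
  case 1
  then show ?case by (simp add: admissible_replicate_0)
next
  case (2 x)
  then show ?case using admissible_replicate_0[of N] by (cases N) auto
qed auto

lemma zval_Nil [simp]: "zval [] = 0"
  by (simp add: zval_def)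

lemma zval_Cons [simp]: "zval (x # xs) = x * zF (length xs + 1) + zval xs"
proof -
  let ?n = "length xs"
  have "zval (x # xs) = x * zF (?n + 1) + (\<Sum>k=Suc 1..Suc ?n. (x # xs) ! (k - 1) * zF (Suc ?n - k + 1))"
    unfolding zval_def by (subst sum.atLeast_Suc_atMost) auto
  also have "(\<Sum>k=Suc 1..Suc ?n. (x # xs) ! (k - 1) * zF (Suc ?n - k + 1)) = zval xs"
    unfolding zval_def sum.shift_bounds_cl_Suc_ivl by (rule sum.cong) auto
  finally show ?thesis .
qed

lemma zval_replicate_0 [simp]: "zval (replicate n 0) = 0"
  by (induction n) auto

lemma zval_replicate_0_append [simp]: "zval (replicate n 0 @ ys) = zval ys"
  by (induction n) auto

lemma zval_append: "zval (u @ v) = zval (u @ replicate (length v) 0) + zval v"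
  by (induction u) auto

lemma zF_pos: "zF n > 0"
  by (induction n rule: zF.induct) auto

lemma zF_mono: "m \<le> n \<Longrightarrow> zF m \<le> zF n"
proof (induction n)
  case (Suc n)
  have "zF n \<le> zF (Suc n)" by (cases n) auto
  then show ?case using Suc by (auto simp: le_Suc_eq)
qed simp

lemma less_zF_Suc: "n < zF (Suc n)"
proof (induction n)
  case (Suc n)
  then show ?case using zF_pos[of n] by simp
qed simp

lemma zval_less_zF: "admissible xs \<Longrightarrow> zval xs < zF (length xs + 1)"
proof (induction "length xs" arbitrary: xs rule: less_induct)
  case less
  show ?case
  proof (cases xs)
    case (Cons x ys)
    have IH: "zval ys < zF (length ys + 1)"
      using less Cons admissible_ConsD by auto
    have "x \<le> 1" using less.prems Cons admissible_digit_le_1 by auto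
    then consider "x = 0" | "x = 1" "ys = []" | zs where "x = 1" "ys = 0 # zs"
      using less.prems Cons by (cases ys) (auto simp: le_Suc_eq)
    then show ?thesis
    proof cases
      case 1
      then show ?thesis using Cons IH zF_mono[of "length ys + 1" "length ys + 2"] by simp
    next
      case 3
      then have "admissible zs" using less.prems Cons admissible_ConsD by auto
      moreover have "zval zs < zF (length zs + 1)" using less Cons 3 \<open>admissible zs\<close> by auto
      ultimately show ?thesis using Cons 3 by (simp add: numeral_2_eq_2)
    qed (use Cons in simp)
  qed simp
qed

lemma zF_le_zval: "xs \<noteq> [] \<Longrightarrow> hd xs = 1 \<Longrightarrow> zF (length xs) \<le> zval xs"
  by (cases xs) auto

lemma zval_padded_pos: "c \<noteq> [] \<Longrightarrow> hd c = 1 \<Longrightarrow> zval (c @ replicate N 0) > 0"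
  using zF_le_zval[of "c @ replicate N 0"] zF_pos[of "length (c @ replicate N 0)"] by simp

lemma zF_index_unique:
  assumes "zF i \<le> m" "m < zF (i + 1)" "zF j \<le> m" "m < zF (j + 1)"
  shows "i = j"
proof (rule ccontr)
  assume "i \<noteq> j"
  then consider "i + 1 \<le> j" | "j + 1 \<le> i" by linarith
  then show False
    by cases (use assms zF_mono in fastforce)+
qed

definition digits_less :: "nat list \<Rightarrow> nat list \<Rightarrow> bool" where
  "digits_less xs ys \<longleftrightarrow> (\<exists>i<length xs. take i xs = take i ys \<and> xs ! i = 0 \<and> ys ! i = 1)"

lemma first_difference:
  assumes "length xs = length ys" "xs \<noteq> ys"
  shows "\<exists>i<length xs. take i xs = take i ys \<and> xs ! i \<noteq> ys ! i"
  using assms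
proof (induction xs arbitrary: ys)
  case (Cons x xs)
  then obtain y ys' where ys: "ys = y # ys'" by (cases ys) auto
  show ?case
  proof (cases "x = y")
    case True
    then obtain i where "i < length xs" "take i xs = take i ys'" "xs ! i \<noteq> ys' ! i"
      using Cons ys by auto
    then show ?thesis using True ys by (intro exI[of _ "Suc i"]) auto
  qed (use ys in \<open>intro exI[of _ 0], auto\<close>)
qed simp

lemma digits_less_trichotomy:
  assumes "admissible xs" "admissible ys" "length xs = length ys"
  shows "xs = ys \<or> digits_less xs ys \<or> digits_less ys xs"
proof (rule disjCI)
  assume "\<not> (digits_less xs ys \<or> digits_less ys xs)"
  moreover have "\<exists>i<length xs. take i xs = take i ys \<and> xs ! i \<noteq> ys ! i" if "xs \<noteq> ys"
    using first_difference assms(3) that .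
  moreover have "xs ! i \<le> 1 \<and> ys ! i \<le> 1" if "i < length xs" for i
    using assms that admissible_digit_le_1 nth_mem by metis
  ultimately show "xs = ys"
    unfolding digits_less_def using assms(3) by (metis le_Suc_eq le_zero_eq One_nat_def)
qed

lemma digits_less_append:
  "digits_less xs ys \<Longrightarrow> length xs = length ys \<Longrightarrow> digits_less (xs @ u) (ys @ v)"
  unfolding digits_less_def by (auto simp: nth_append)

lemma zval_less_of_digits_less:
  assumes "digits_less xs ys" "admissible xs" "length xs = length ys"
  shows "zval xs < zval ys"
proof -
  obtain i where "i < length xs" "take i xs = take i ys" "xs ! i = 0" "ys ! i = 1"
    using assms(1) unfolding digits_less_def by blast
  then show ?thesis
    using assms(2,3)
  proof (induction i arbitrary: xs ys)
    case 0
    then obtain xs' ys' where "xs = 0 # xs'" "ys = 1 # ys'"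
      by (cases xs; cases ys) auto
    then show ?case
      using 0 zval_less_zF[of xs'] admissible_ConsD by fastforce
  next
    case (Suc i)
    then obtain x xs' ys' where "xs = x # xs'" "ys = x # ys'"
      by (cases xs; cases ys) auto
    then show ?case
      using Suc.IH[of xs' ys'] Suc.prems admissible_ConsD by auto
  qed
qed

lemma zval_inj:
  assumes "admissible xs" "admissible ys" "length xs = length ys" "zval xs = zval ys"
  shows "xs = ys"
  using digits_less_trichotomy[OF assms(1-3)] zval_less_of_digits_less[of xs ys]
    zval_less_of_digits_less[of ys xs] assms by auto

lemma exists_admissible_zval:
  "m < zF (n + 1) \<Longrightarrow> \<exists>xs. length xs = n \<and> admissible xs \<and> zval xs = m"
proof (induction n arbitrary: m rule: less_induct)
  case (less n)
  consider "n = 0" | "n = 1" | n2 where "n = n2 + 2" by (metis add_2_eq_Suc' not0_implies_Suc One_nat_def)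
  then show ?case
  proof cases
    case 1
    then show ?thesis using less by (intro exI[of _ "[]"]) auto
  next
    case 2
    then show ?thesis using less by (intro exI[of _ "[m]"]) auto
  next
    case 3
    show ?thesis
    proof (cases "m < zF n")
      case True
      then obtain ys where "length ys = n2 + 1" "admissible ys" "zval ys = m"
        using less.IH[of "n2 + 1" m] 3 by auto
      then show ?thesis using 3
        by (intro exI[of _ "0 # ys"]) (cases ys, auto)
    next
      case False
      have "m - zF n < zF (n2 + 1)" using less.prems False 3 by (simp add: numeral_2_eq_2)
      then obtain ys where "length ys = n2" "admissible ys" "zval ys = m - zF n"
        using less.IH[of n2 "m - zF n"] 3 by auto
      then show ?thesis using 3 False
        by (intro exI[of _ "1 # 0 # ys"]) (cases ys, auto simp: numeral_2_eq_2)
    qed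
  qed
qed

lemma is_zeck_iff: "is_zeck eps m \<longleftrightarrow> eps \<noteq> [] \<and> hd eps = 1 \<and> admissible eps \<and> zval eps = m"
  unfolding is_zeck_def admissible_iff by auto

lemma is_zeck_exists:
  assumes "m > 0"
  shows "\<exists>eps. is_zeck eps m"
proof -
  obtain xs where xs: "admissible xs" "zval xs = m"
    using exists_admissible_zval[of m m] less_zF_Suc[of m] by auto
  define zs where "zs = takeWhile (\<lambda>x. x = 0) xs"
  define ys where "ys = dropWhile (\<lambda>x. x = 0) xs"
  have "\<forall>y\<in>set zs. y = 0"
    unfolding zs_def by (auto dest: set_takeWhileD)
  then have "replicate (length zs) 0 = zs"
    by (rule replicate_length_same)
  then have xs_eq: "xs = replicate (length zs) 0 @ ys"
    unfolding zs_def ys_def by simp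
  have "zval ys = m"
    using xs(2) unfolding xs_eq by simp
  moreover have "admissible ys"
    using xs(1) admissible_appendD unfolding xs_eq by blast
  moreover have "ys \<noteq> []" using \<open>zval ys = m\<close> assms by auto
  moreover have "hd ys \<noteq> 0"
    using hd_dropWhile[of "\<lambda>x. x = 0" xs] \<open>ys \<noteq> []\<close> unfolding ys_def by simp
  moreover have "hd ys \<le> 1"
    using admissible_digit_le_1[OF \<open>admissible ys\<close> hd_in_set[OF \<open>ys \<noteq> []\<close>]] .
  ultimately show ?thesis
    unfolding is_zeck_iff by (intro exI[of _ ys]) simp
qed

lemma is_zeck_unique:
  assumes "is_zeck e1 m" "is_zeck e2 m"
  shows "e1 = e2"
proof -
  have bounds: "zF (length e) \<le> m \<and> m < zF (length e + 1)" if "is_zeck e m" for e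
    using that zF_le_zval[of e] zval_less_zF[of e] unfolding is_zeck_iff by auto
  have "length e1 = length e2"
    using bounds[OF assms(1)] bounds[OF assms(2)] by (intro zF_index_unique) auto
  then show ?thesis
    using zval_inj[of e1 e2] assms unfolding is_zeck_iff by simp
qed

lemma zeck:
  assumes "m > 0"
  shows "zeck m \<noteq> []" "hd (zeck m) = 1" "admissible (zeck m)" "zval (zeck m) = m"
proof -
  have "\<exists>!eps. is_zeck eps m"
    using is_zeck_exists[OF assms] is_zeck_unique by blast
  then have "is_zeck (zeck m) m"
    unfolding zeck_def by (rule theI')
  then show "zeck m \<noteq> []" "hd (zeck m) = 1" "admissible (zeck m)" "zval (zeck m) = m"
    unfolding is_zeck_iff by auto
qed

lemma zeck_zval:
  assumes "c \<noteq> []" "hd c = 1" "admissible c"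
  shows "zeck (zval c) = c"
proof -
  have "zval c > 0" using zF_le_zval[OF assms(1,2)] zF_pos[of "length c"] by linarith
  then have "is_zeck (zeck (zval c)) (zval c)"
    using zeck unfolding is_zeck_iff by blast
  moreover have "is_zeck c (zval c)"
    using assms unfolding is_zeck_iff by blast
  ultimately show ?thesis by (rule is_zeck_unique)
qed

lemma LB_eq_Some_iff: "LB s m = Some bs \<longleftrightarrow> s \<le> length (zeck m) \<and> take s (zeck m) = bs"
  unfolding LB_def by auto

lemma Fs_iff:
  assumes "s \<ge> 1"
  shows "c \<in> Fs s \<longleftrightarrow> length c = s \<and> hd c = 1 \<and> admissible c"
proof
  assume "c \<in> Fs s"
  then obtain m where m: "m > 0" "s \<le> length (zeck m)" "take s (zeck m) = c"
    unfolding Fs_def LB_eq_Some_iff by auto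
  have "admissible (take s (zeck m) @ drop s (zeck m))"
    using zeck(3)[OF m(1)] by simp
  then have "admissible c"
    using m(3) admissible_appendD by blast
  moreover have "hd c = 1"
    unfolding m(3)[symmetric] using zeck(2)[OF m(1)] assms by (simp add: hd_take)
  ultimately show "length c = s \<and> hd c = 1 \<and> admissible c"
    using m by auto
next
  assume c: "length c = s \<and> hd c = 1 \<and> admissible c"
  then have "c \<noteq> []" using assms by auto
  then have "zval c > 0" "LB s (zval c) = Some c"
    using c zF_le_zval[of c] zF_pos[of s] zeck_zval[of c] unfolding LB_eq_Some_iff by auto
  then show "c \<in> Fs s" unfolding Fs_def by blast
qed

lemma Fs_zval_bounds: "s \<ge> 1 \<Longrightarrow> c \<in> Fs s \<Longrightarrow> zF s \<le> zval c \<and> zval c < zF (s + 1)"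
  using Fs_iff[of s c] zF_le_zval[of c] zval_less_zF[of c] by (cases c) auto

lemma exists_Fs_zval:
  assumes s: "s \<ge> 1" and v: "zF s \<le> v" "v < zF (s + 1)"
  shows "\<exists>c\<in>Fs s. zval c = v"
proof -
  obtain ys where ys: "length ys = s" "admissible ys" "zval ys = v"
    using exists_admissible_zval[OF v(2)] by blast
  then obtain x xs where x: "ys = x # xs"
    using s by (cases ys) auto
  have "zval xs < zF s"
    using zval_less_zF[of xs] admissible_ConsD ys x by auto
  then have "x \<noteq> 0" using ys x v by (intro notI) simp
  moreover have "x \<le> 1" using ys x admissible_digit_le_1 by auto
  ultimately show ?thesis
    using Fs_iff[OF s] ys x by (intro bexI[of _ ys]) auto
qed

lemma succ_block_cases:
  assumes s: "s \<ge> 1" and bs: "bs \<in> Fs s"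
  shows "(succ_block s bs \<in> Fs s \<and> zval (succ_block s bs) = zval bs + 1)
       \<or> (succ_block s bs = last_succ s \<and> zval bs + 1 = zF (s + 1))"
proof (cases "\<exists>c\<in>Fs s. zval c = zval bs + 1")
  case True
  have "\<exists>!c. c \<in> Fs s \<and> zval c = zval bs + 1"
    using True zval_inj Fs_iff[OF s] by metis
  from theI'[OF this] show ?thesis
    unfolding succ_block_def using True by simp
next
  case False
  then have "zval bs + 1 = zF (s + 1)"
    using Fs_zval_bounds[OF s bs] exists_Fs_zval[OF s, of "zval bs + 1"] by fastforce
  then show ?thesis
    unfolding succ_block_def using False by simp
qed

lemma last_succ_shape:
  assumes "s \<ge> 2"
  obtains q R where "last_succ s = concat (replicate q [1, 0]) @ R"
    "R = [1, 1] \<or> R = [1, 1, 0]" "s = 2 * q + length R"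
proof (cases "even s")
  case True
  then obtain k where "s = 2 * k" by (rule evenE)
  with assms have "s = 2 * (k - 1) + length [1, 1::nat]" "(s - 2) div 2 = k - 1" by auto
  then show ?thesis
    using that[of "k - 1" "[1, 1]"] True unfolding last_succ_def by simp
next
  case False
  then obtain k where "s = 2 * k + 1" by (rule oddE)
  with assms have "s = 2 * (k - 1) + length [1, 1, 0::nat]" "(s - 3) div 2 = k - 1" by auto
  then show ?thesis
    using that[of "k - 1" "[1, 1, 0]"] False unfolding last_succ_def by simp
qed

lemma length_last_succ: "s \<ge> 2 \<Longrightarrow> length (last_succ s) = s"
  by (rule last_succ_shape) (auto simp: length_concat sum_list_replicate)

lemma hd_last_succ: "s \<ge> 2 \<Longrightarrow> hd (last_succ s) = 1"
  by (rule last_succ_shape) (auto simp: hd_append hd_concat split: if_splits)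

lemma last_succ_digits: "s \<ge> 2 \<Longrightarrow> \<forall>x\<in>set (last_succ s). x \<le> 1"
  by (rule last_succ_shape) (auto simp: set_concat split: if_splits)

lemma zval_last_succ_padded:
  assumes "s \<ge> 2"
  shows "zval (last_succ s @ replicate N 0) = zF (s + N + 1)"
proof -
  have pairs: "zval (concat (replicate q [1, 0]) @ R) = zF (2 * q + length R + 1)"
    if "zval R = zF (length R + 1)" for q R
    using that by (induction q) (simp_all add: length_concat sum_list_replicate numeral_2_eq_2)
  obtain q R where "last_succ s = concat (replicate q [1, 0]) @ R"
    "R = [1, 1] \<or> R = [1, 1, 0]" "s = 2 * q + length R"
    using last_succ_shape[OF assms] by blast
  moreover have "zval (R @ replicate N 0) = zF (length (R @ replicate N 0) + 1)"
    using calculation(2) by (auto simp: numeral_2_eq_2 numeral_3_eq_3)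
  ultimately show ?thesis
    using pairs[of "R @ replicate N 0" q] by (simp add: add.assoc)
qed

lemma zval_padded_le_iff:
  assumes pt: "admissible (p @ t)" and c: "admissible c" and len: "length c = length p"
  shows "zval (c @ replicate (length t) 0) \<le> zval (p @ t) \<longleftrightarrow> zval c \<le> zval p"
proof -
  have p: "admissible p" using admissible_appendD pt by blast
  have c0: "admissible (c @ replicate (length t) 0)" using admissible_append_zeros c by blast
  consider "c = p" | "digits_less c p" | "digits_less p c"
    using digits_less_trichotomy[OF c p len] by blast
  then show ?thesis
  proof cases
    case 1
    then show ?thesis using zval_append[of p t] by simp
  next
    case 2
    then have "zval c < zval p" "zval (c @ replicate (length t) 0) < zval (p @ t)"
      using zval_less_of_digits_less c c0 len digits_less_append by auto
    then show ?thesis by simp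
  next
    case 3
    then have "zval p < zval c" "zval (p @ t) < zval (c @ replicate (length t) 0)"
      using zval_less_of_digits_less p pt len digits_less_append by auto
    then show ?thesis by simp
  qed
qed

lemma interval_of_LB:
  assumes s: "s \<ge> 2" and bs: "bs \<in> Fs s" and m: "m > 0" and LB: "LB s m = Some bs"
  shows "\<exists>N. zval (bs @ replicate N 0) \<le> m \<and> m < zval (succ_block s bs @ replicate N 0)"
proof -
  let ?sc = "succ_block s bs"
  define t where "t = drop s (zeck m)"
  have z: "zeck m = bs @ t" "admissible (bs @ t)" "zval (bs @ t) = m"
    using LB zeck[OF m] unfolding t_def LB_eq_Some_iff by (metis append_take_drop_id)+
  have s1: "s \<ge> 1" using s by simp
  have bsp: "length bs = s" "admissible bs" using Fs_iff bs s by auto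
  have "zval (bs @ replicate (length t) 0) \<le> m"
    using zval_padded_le_iff[OF z(2) bsp(2)] z(3) by simp
  moreover have "m < zval (?sc @ replicate (length t) 0)"
    using succ_block_cases[OF s1 bs]
  proof (elim disjE conjE)
    assume "?sc \<in> Fs s" "zval ?sc = zval bs + 1"
    then show ?thesis
      using zval_padded_le_iff[OF z(2), of ?sc] Fs_iff[of s ?sc] s bsp z(3) by auto
  next
    assume "?sc = last_succ s" "zval bs + 1 = zF (s + 1)"
    then show ?thesis
      using zval_less_zF[OF z(2)] zval_last_succ_padded[OF s] z(3) bsp by simp
  qed
  ultimately show ?thesis by blast
qed

lemma LB_of_interval:
  assumes s: "s \<ge> 2" and bs: "bs \<in> Fs s"
    and lo: "zval (bs @ replicate N 0) \<le> m" and hi: "m < zval (succ_block s bs @ replicate N 0)"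
  shows "LB s m = Some bs"
proof -
  let ?sc = "succ_block s bs"
  have bsp: "length bs = s" "hd bs = 1" "admissible bs" using Fs_iff bs s by auto
  have "zF (s + N) \<le> zval (bs @ replicate N 0)"
    using zF_le_zval[of "bs @ replicate N 0"] bsp s by (cases bs) auto
  then have m_lo: "zF (s + N) \<le> m" using lo by linarith
  then have m: "m > 0" using zF_pos[of "s + N"] by linarith
  have sc: "(admissible ?sc \<and> length ?sc = s \<and> zval ?sc = zval bs + 1)
      \<or> (?sc = last_succ s \<and> zval bs + 1 = zF (s + 1))"
    using succ_block_cases[OF _ bs] Fs_iff[of s ?sc] s by auto
  have "zval (?sc @ replicate N 0) \<le> zF (s + N + 1)"
    using sc zval_last_succ_padded[OF s, of N]
      zval_less_zF[OF admissible_append_zeros, of ?sc N] by auto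
  then have m_hi: "m < zF (s + N + 1)" using hi by linarith
  have "length (zeck m) = s + N"
    using zF_le_zval[of "zeck m"] zval_less_zF[of "zeck m"] zeck[OF m] m_lo m_hi
    by (intro zF_index_unique) auto
  define p where "p = take s (zeck m)"
  define t where "t = drop s (zeck m)"
  have z: "admissible (p @ t)" "zval (p @ t) = m" "length p = s" "length t = N"
    using zeck[OF m] \<open>length (zeck m) = s + N\<close> unfolding p_def t_def by auto
  have p: "admissible p" using admissible_appendD z(1) by blast
  have "zval bs \<le> zval p"
    using zval_padded_le_iff[OF z(1) bsp(3)] z bsp lo by simp
  moreover have "zval p < zval bs + 1"
    using sc
  proof (elim disjE conjE)
    assume "admissible ?sc" "length ?sc = s" "zval ?sc = zval bs + 1"
    then show ?thesis
      using zval_padded_le_iff[OF z(1), of ?sc] z hi by auto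
  next
    assume "zval bs + 1 = zF (s + 1)"
    then show ?thesis using zval_less_zF[OF p] z by simp
  qed
  ultimately have "p = bs" using zval_inj[OF p bsp(3)] z bsp by simp
  then show ?thesis
    unfolding LB_eq_Some_iff using \<open>length (zeck m) = s + N\<close> p_def by simp
qed

section \<open>Golden ratio weights and Binet's formula\<close>

lemma sqrt5_bounds: "2 < sqrt (5::real)" "sqrt (5::real) < 3"
proof -
  show "2 < sqrt (5::real)" by (rule real_less_rsqrt) simp
  show "sqrt (5::real) < 3" by (rule real_less_lsqrt) simp_all
qed

lemma phi_squared: "phi * phi = phi + 1"
  unfolding phi_def by (simp add: field_simps)

lemma phi_gt_1: "phi > 1" and phi_less_2: "phi < 2"
  unfolding phi_def using sqrt5_bounds by auto

lemma omega_phi: "omega * phi = 1"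
  unfolding omega_def using phi_gt_1 by simp

lemma omega_eq: "omega = phi - 1"
  using phi_squared phi_gt_1 unfolding omega_def by (simp add: field_simps)

lemma omega_pos: "omega > 0"
  using omega_eq phi_gt_1 by simp

lemma phi_powr_margin:
  assumes "\<eta> > 0"
  shows "0 < 1 - phi powr - \<eta>" "1 - phi powr - \<eta> < 1"
proof -
  have "phi powr - \<eta> < phi powr 0" using assms phi_gt_1 by (intro powr_less_mono) auto
  then show "0 < 1 - phi powr - \<eta>" using phi_gt_1 by simp
  show "1 - phi powr - \<eta> < 1" using phi_gt_1 by simp
qed

lemma dotw_Nil [simp]: "dotw [] = 0"
  by (simp add: dotw_def)

lemma dotw_Cons [simp]: "dotw (x # xs) = real x + omega * dotw xs"
proof -
  let ?n = "length xs"
  have "dotw (x # xs) = real x + (\<Sum>k=Suc 1..Suc ?n. real ((x # xs) ! (k - 1)) * omega ^ (k - 1))"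
    unfolding dotw_def by (subst sum.atLeast_Suc_atMost) auto
  also have "(\<Sum>k=Suc 1..Suc ?n. real ((x # xs) ! (k - 1)) * omega ^ (k - 1)) = omega * dotw xs"
    unfolding dotw_def sum.shift_bounds_cl_Suc_ivl sum_distrib_left
    by (rule sum.cong) (auto simp: power_eq_if)
  finally show ?thesis .
qed

lemma dotw_nonneg: "dotw xs \<ge> 0"
  by (induction xs) (auto simp: less_imp_le[OF omega_pos])

lemma dotw_less_phi: "admissible xs \<Longrightarrow> dotw xs < phi"
proof (induction "length xs" arbitrary: xs rule: less_induct)
  case less
  show ?case
  proof (cases xs)
    case (Cons x ys)
    have "dotw ys < phi"
      using less Cons admissible_ConsD by auto
    then have IH: "omega * dotw ys < 1"
      using omega_pos omega_phi by (metis mult_strict_left_mono)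
    have "x \<le> 1" using less.prems Cons admissible_digit_le_1 by auto
    then consider "x = 0" | "x = 1" "ys = []" | zs where "x = 1" "ys = 0 # zs"
      using less.prems Cons by (cases ys) (auto simp: le_Suc_eq)
    then show ?thesis
    proof cases
      case 1
      then show ?thesis using Cons IH phi_gt_1 by simp
    next
      case 3
      then have "dotw zs < phi"
        using less Cons admissible_ConsD by auto
      then have "omega * dotw zs < 1"
        using omega_pos omega_phi by (metis mult_strict_left_mono)
      then have "omega * (omega * dotw zs) < omega"
        using omega_pos by simp
      then show ?thesis using Cons 3 omega_eq by simp
    qed (use Cons phi_gt_1 in simp)
  qed (use phi_gt_1 in simp)
qed

lemma dotw_less_of_digits_less:
  assumes "digits_less xs ys" "admissible xs" "length xs = length ys"
  shows "dotw xs < dotw ys"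
proof -
  obtain i where "i < length xs" "take i xs = take i ys" "xs ! i = 0" "ys ! i = 1"
    using assms(1) unfolding digits_less_def by blast
  then show ?thesis
    using assms(2,3)
  proof (induction i arbitrary: xs ys)
    case 0
    then obtain xs' ys' where "xs = 0 # xs'" "ys = 1 # ys'"
      by (cases xs; cases ys) auto
    moreover have "dotw xs' < phi"
      using 0 calculation dotw_less_phi admissible_ConsD by blast
    then have "omega * dotw xs' < 1"
      using omega_pos omega_phi by (metis mult_strict_left_mono)
    ultimately show ?case
      using mult_nonneg_nonneg[OF less_imp_le[OF omega_pos] dotw_nonneg[of ys']] by simp
  next
    case (Suc i)
    then obtain x xs' ys' where "xs = x # xs'" "ys = x # ys'"
      by (cases xs; cases ys) auto
    then show ?case
      using Suc.IH[of xs' ys'] Suc.prems admissible_ConsD omega_pos by auto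
  qed
qed

lemma dotw_strict_mono:
  assumes "admissible xs" "admissible ys" "length xs = length ys" "zval xs < zval ys"
  shows "dotw xs < dotw ys"
  using digits_less_trichotomy[OF assms(1-3)] zval_less_of_digits_less[of ys xs]
    dotw_less_of_digits_less[of xs ys] assms by auto

lemma one_le_dotw: "xs \<noteq> [] \<Longrightarrow> hd xs = 1 \<Longrightarrow> 1 \<le> dotw xs"
  using omega_pos dotw_nonneg by (cases xs) auto

lemma dotw_last_succ:
  assumes "s \<ge> 2"
  shows "dotw (last_succ s) = phi"
proof -
  obtain q R where "last_succ s = concat (replicate q [1, 0]) @ R" "R = [1, 1] \<or> R = [1, 1, 0]"
    using last_succ_shape[OF assms] by blast
  moreover have "dotw R = phi" using calculation(2) omega_eq by auto
  moreover have "dotw (concat (replicate q [1, 0]) @ R) = phi" if "dotw R = phi" for q R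
    using that omega_eq by (induction q) (simp_all add: omega_phi)
  ultimately show ?thesis by simp
qed

lemma binet: "real (zF n) = (phi ^ (n + 1) - (1 - phi) ^ (n + 1)) / sqrt 5"
proof (induction n rule: zF.induct)
  case 1
  then show ?case unfolding phi_def by simp
next
  case 2
  then show ?case unfolding phi_def by (simp add: field_simps power2_eq_square)
next
  case (3 n)
  have "x ^ (n + 3) = x ^ (n + 2) + x ^ (n + 1)" if "x * x = x + 1" for x :: real
  proof -
    have "x ^ (n + 3) = x ^ (n + 1) * (x * x)" "x ^ (n + 2) = x ^ (n + 1) * x"
      by (simp_all add: power_add numeral_3_eq_3 numeral_2_eq_2)
    then show ?thesis using that by (simp add: algebra_simps)
  qed
  moreover have "(1 - phi) * (1 - phi) = (1 - phi) + 1"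
    using phi_squared by (simp add: algebra_simps)
  ultimately show ?case
    using 3 phi_squared
    by (simp add: numeral_3_eq_3 numeral_2_eq_2 diff_divide_distrib add_divide_distrib)
qed

lemma zF_binet_error: "\<bar>real (zF n) - phi ^ (n + 1) / sqrt 5\<bar> \<le> 1"
proof -
  have "\<bar>1 - phi\<bar> ^ (n + 1) \<le> 1"
    using phi_gt_1 phi_less_2 by (intro power_le_one) auto
  then have "\<bar>(1 - phi) ^ (n + 1)\<bar> / sqrt 5 \<le> 1"
    using sqrt5_bounds unfolding power_abs by simp
  then show ?thesis
    unfolding binet by (simp add: diff_divide_distrib)
qed

lemma zval_padded_approx:
  assumes "\<forall>x\<in>set c. x \<le> 1"
  shows "\<bar>real (zval (c @ replicate N 0)) - phi ^ (length c + N + 1) / sqrt 5 * dotw c\<bar> \<le> length c"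
  using assms
proof (induction c)
  case (Cons x c)
  let ?k = "length c + N + 1"
  have "phi ^ (?k + 1) / sqrt 5 * dotw (x # c)
      = real x * (phi ^ (?k + 1) / sqrt 5) + phi ^ ?k / sqrt 5 * dotw c"
    using omega_phi by (simp add: algebra_simps add_divide_distrib)
  then have "real (zval ((x # c) @ replicate N 0)) - phi ^ (?k + 1) / sqrt 5 * dotw (x # c)
      = real x * (real (zF ?k) - phi ^ (?k + 1) / sqrt 5)
        + (real (zval (c @ replicate N 0)) - phi ^ ?k / sqrt 5 * dotw c)"
    by (simp add: algebra_simps)
  moreover have "\<bar>real x * (real (zF ?k) - phi ^ (?k + 1) / sqrt 5)\<bar> \<le> 1"
    using zF_binet_error[of ?k] Cons.prems by (simp add: abs_mult mult_le_one)
  ultimately show ?case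
    using Cons by (simp add: add_ac)
qed simp

section \<open>Leading blocks from logarithms\<close>

lemma abs_log_diff_le:
  fixes B x y e \<eta> :: real
  assumes B: "B > 1" and x: "x > 0" and close: "\<bar>y - x\<bar> \<le> e" and e: "e \<le> x * (1 - B powr - \<eta>)"
  shows "\<bar>log B y - log B x\<bar> \<le> \<eta>"
proof -
  define u where "u = B powr \<eta>"
  have u: "u > 0" "B powr - \<eta> = 1 / u" unfolding u_def using B by (simp_all add: powr_minus_divide)
  have "x * (1 / u) \<le> y"
    using close e u by (simp add: algebra_simps)
  moreover have "y \<le> x * u"
  proof -
    have "0 \<le> (u - 1) ^ 2" by simp
    then have "2 * u - 1 \<le> u * u" by (simp add: power2_eq_square algebra_simps)
    then have "2 - 1 / u \<le> u" using u(1) by (simp add: field_simps)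
    then have "x * (2 - 1 / u) \<le> x * u" using x by (intro mult_left_mono) auto
    then show ?thesis using close e u by (simp add: algebra_simps)
  qed
  moreover have "x * (1 / u) > 0" using x u by simp
  ultimately have "log B (x * (1 / u)) \<le> log B y" "log B y \<le> log B (x * u)"
    using B by (simp_all add: log_le_cancel_iff)
  moreover have "log B (x * (1 / u)) = log B x - \<eta>" "log B (x * u) = log B x + \<eta>"
    using B x u unfolding u_def by (simp_all add: log_mult log_divide)
  ultimately show ?thesis by linarith
qed

lemma succ_block_props:
  assumes s: "s \<ge> 2" and bs: "bs \<in> Fs s"
  shows "length bs = s" "length (succ_block s bs) = s"
    "\<forall>x\<in>set bs. x \<le> 1" "\<forall>x\<in>set (succ_block s bs). x \<le> 1"
    "1 \<le> dotw bs" "dotw bs < dotw (succ_block s bs)" "dotw (succ_block s bs) \<le> phi"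
    "hd bs = 1" "hd (succ_block s bs) = 1"
proof -
  let ?sc = "succ_block s bs"
  have s1: "s \<ge> 1" using s by simp
  have bsp: "length bs = s" "hd bs = 1" "admissible bs" using Fs_iff[OF s1] bs by auto
  have sc: "(admissible ?sc \<and> length ?sc = s \<and> zval bs < zval ?sc) \<or> ?sc = last_succ s"
    using succ_block_cases[OF s1 bs] Fs_iff[OF s1] by auto
  show "length bs = s" "hd bs = 1" using bsp by simp_all
  show "hd ?sc = 1"
    using succ_block_cases[OF s1 bs] Fs_iff[OF s1, of ?sc] hd_last_succ[OF s] by auto
  show "length ?sc = s" using sc length_last_succ[OF s] by auto
  show "\<forall>x\<in>set bs. x \<le> 1" using bsp admissible_digit_le_1 by blast
  show "\<forall>x\<in>set ?sc. x \<le> 1" using sc admissible_digit_le_1 last_succ_digits[OF s] by auto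
  show "1 \<le> dotw bs" using one_le_dotw[of bs] bsp s by (cases bs) auto
  show "dotw bs < dotw ?sc"
    using sc dotw_strict_mono[of bs ?sc] bsp dotw_last_succ[OF s] dotw_less_phi[OF bsp(3)] by auto
  show "dotw ?sc \<le> phi"
    using sc dotw_less_phi[of ?sc] dotw_last_succ[OF s] by (auto intro: less_imp_le)
qed

lemma log_zval_padded_close:
  assumes digits: "\<forall>x\<in>set c. x \<le> 1" and d: "1 \<le> dotw c"
    and large: "real (length c) \<le> phi ^ (length c + N + 1) / sqrt 5 * (1 - phi powr - \<eta>)"
  shows "\<bar>log phi (zval (c @ replicate N 0))
           - (log phi (phi ^ (length c + N + 1) / sqrt 5) + log phi (dotw c))\<bar> \<le> \<eta>"
proof -
  define X where "X = phi ^ (length c + N + 1) / sqrt 5"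
  have X: "X > 0" unfolding X_def using phi_gt_1 by simp
  moreover have "0 \<le> X * (1 - phi powr - \<eta>)"
    using large unfolding X_def[symmetric] by (meson of_nat_0_le_iff order_trans)
  ultimately have "0 \<le> 1 - phi powr - \<eta>"
    by (simp add: zero_le_mult_iff)
  then have "X * (1 - phi powr - \<eta>) \<le> X * dotw c * (1 - phi powr - \<eta>)"
    using X d by (simp add: mult_right_mono)
  then have "real (length c) \<le> X * dotw c * (1 - phi powr - \<eta>)"
    using large unfolding X_def[symmetric] by linarith
  then have "\<bar>log phi (zval (c @ replicate N 0)) - log phi (X * dotw c)\<bar> \<le> \<eta>"
    using zval_padded_approx[OF digits, of N] X d phi_gt_1 unfolding X_def[symmetric]
    by (intro abs_log_diff_le) auto
  then show ?thesis
    using X d phi_gt_1 unfolding X_def[symmetric] by (simp add: log_mult)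
qed

text \<open>Up to a small error, zeck_log s m is the number of Zeckendorf digits of m beyond the
  first s plus log_phi of the weight dotw of its leading s-block.\<close>

definition zeck_log :: "nat \<Rightarrow> nat \<Rightarrow> real" where
  "zeck_log s m = log phi (real m) - log phi (phi ^ (s + 1) / sqrt 5)"

lemma log_phi_binet_scale: "log phi (phi ^ (s + N + 1) / sqrt 5) = log phi (phi ^ (s + 1) / sqrt 5) + N"
proof -
  have "phi ^ (s + N + 1) / sqrt 5 = phi ^ (s + 1) / sqrt 5 * phi ^ N"
    by (simp add: power_add algebra_simps)
  also have "log phi \<dots> = log phi (phi ^ (s + 1) / sqrt 5) + log phi (phi ^ N)"
    using phi_gt_1 by (intro log_mult_pos) auto
  finally show ?thesis
    using phi_gt_1 by (simp add: log_nat_power)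
qed

lemma zeck_log_less_iff: "0 < a \<Longrightarrow> 0 < b \<Longrightarrow> zeck_log s a < zeck_log s b \<longleftrightarrow> a < b"
  and zeck_log_le_iff: "0 < a \<Longrightarrow> 0 < b \<Longrightarrow> zeck_log s a \<le> zeck_log s b \<longleftrightarrow> a \<le> b"
  unfolding zeck_log_def using phi_gt_1 by simp_all

lemma zeck_log_block_close:
  assumes s: "s \<ge> 2" and bs: "bs \<in> Fs s" and b: "b = bs \<or> b = succ_block s bs"
    and large: "real s \<le> phi ^ (s + n + 1) / sqrt 5 * (1 - phi powr - \<eta>)"
  shows "\<bar>zeck_log s (zval (b @ replicate n 0)) - (n + log phi (dotw b))\<bar> \<le> \<eta>"
proof -
  note P = succ_block_props[OF s bs]
  have "length b = s" "\<forall>x\<in>set b. x \<le> 1" "1 \<le> dotw b"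
    using b P by auto
  then show ?thesis
    using log_zval_padded_close[of b n \<eta>] large log_phi_binet_scale[of s n]
    unfolding zeck_log_def by simp
qed

lemma LB_of_log_window:
  assumes s: "s \<ge> 2" and bs: "bs \<in> Fs s" and m: "m > 0"
    and large: "real s \<le> phi ^ (s + n + 1) / sqrt 5 * (1 - phi powr - \<eta>)"
    and lo: "n + log phi (dotw bs) + \<eta> \<le> zeck_log s m"
    and hi: "zeck_log s m < n + log phi (dotw (succ_block s bs)) - \<eta>"
  shows "LB s m = Some bs"
proof -
  let ?sc = "succ_block s bs"
  note P = succ_block_props[OF s bs]
  have ne: "bs \<noteq> []" "?sc \<noteq> []" using P s by auto
  have "zeck_log s (zval (bs @ replicate n 0)) \<le> zeck_log s m"
    using zeck_log_block_close[OF s bs disjI1[OF refl] large] lo by linarith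
  then have "zval (bs @ replicate n 0) \<le> m"
    using zval_padded_pos[OF ne(1)] P m zeck_log_le_iff by simp
  moreover have "zeck_log s m < zeck_log s (zval (?sc @ replicate n 0))"
    using zeck_log_block_close[OF s bs disjI2[OF refl] large] hi by linarith
  then have "m < zval (?sc @ replicate n 0)"
    using zval_padded_pos[OF ne(2)] P m zeck_log_less_iff by simp
  ultimately show ?thesis
    using LB_of_interval[OF s bs] by blast
qed

lemma log_window_of_interval:
  assumes s: "s \<ge> 2" and bs: "bs \<in> Fs s"
    and large: "real s \<le> phi ^ (s + n + 1) / sqrt 5 * (1 - phi powr - \<eta>)"
    and lo: "zval (bs @ replicate n 0) \<le> m" and hi: "m < zval (succ_block s bs @ replicate n 0)"
  shows "n + log phi (dotw bs) - \<eta> \<le> zeck_log s m"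
    "zeck_log s m < n + log phi (dotw (succ_block s bs)) + \<eta>"
proof -
  let ?sc = "succ_block s bs"
  note P = succ_block_props[OF s bs]
  have ne: "bs \<noteq> []" "?sc \<noteq> []" using P s by auto
  have "0 < zval (bs @ replicate n 0)" using zval_padded_pos[OF ne(1)] P by simp
  then have "zeck_log s (zval (bs @ replicate n 0)) \<le> zeck_log s m"
    using lo zeck_log_le_iff by simp
  then show "n + log phi (dotw bs) - \<eta> \<le> zeck_log s m"
    using zeck_log_block_close[OF s bs disjI1[OF refl] large] by linarith
  have "zeck_log s m < zeck_log s (zval (?sc @ replicate n 0))"
    using \<open>0 < zval (bs @ replicate n 0)\<close> lo hi zeck_log_less_iff by simp
  then show "zeck_log s m < n + log phi (dotw ?sc) + \<eta>"
    using zeck_log_block_close[OF s bs disjI2[OF refl] large] by linarith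
qed

lemma log_dotw_succ_block:
  assumes "s \<ge> 2" "bs \<in> Fs s"
  shows "log phi (dotw (succ_block s bs) / dotw bs) = log phi (dotw (succ_block s bs)) - log phi (dotw bs)"
    "log phi (dotw (succ_block s bs)) \<le> 1"
proof -
  note P = succ_block_props[OF assms]
  show "log phi (dotw (succ_block s bs) / dotw bs) = log phi (dotw (succ_block s bs)) - log phi (dotw bs)"
    using P by (intro log_divide_pos) auto
  have "log phi (dotw (succ_block s bs)) \<le> log phi phi"
    using P phi_gt_1 by (subst log_le_cancel_iff) auto
  then show "log phi (dotw (succ_block s bs)) \<le> 1"
    using phi_gt_1 by simp
qed

lemma log_succ_block_ratio_bounds:
  assumes "s \<ge> 2" "bs \<in> Fs s"
  shows "0 < log phi (dotw (succ_block s bs) / dotw bs)" "log phi (dotw (succ_block s bs) / dotw bs) \<le> 1"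
proof -
  note P = succ_block_props[OF assms]
  have "phi * 1 \<le> phi * dotw bs" using P phi_gt_1 by (intro mult_left_mono) auto
  then have "dotw (succ_block s bs) \<le> phi * dotw bs" using P by linarith
  then have "1 < dotw (succ_block s bs) / dotw bs" "dotw (succ_block s bs) / dotw bs \<le> phi"
    using P by (simp_all add: field_simps)
  then show "0 < log phi (dotw (succ_block s bs) / dotw bs)" "log phi (dotw (succ_block s bs) / dotw bs) \<le> 1"
    using phi_gt_1 by (simp_all add: log_le_cancel_iff[of phi _ phi, simplified])
qed

lemma LB_of_frac_window:
  assumes s: "s \<ge> 2" and bs: "bs \<in> Fs s" and \<eta>: "\<eta> > 0"
    and large: "2 * real s * phi \<le> real m * (1 - phi powr - \<eta>)" "phi ^ (s + 2) / sqrt 5 \<le> real m"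
    and window: "frac (zeck_log s m - log phi (dotw bs) - \<eta>)
                   < log phi (dotw (succ_block s bs) / dotw bs) - 2 * \<eta>"
  shows "LB s m = Some bs"
proof -
  define c where "c = log phi (dotw bs)"
  define d where "d = log phi (dotw (succ_block s bs))"
  define y where "y = zeck_log s m"
  define \<theta> where "\<theta> = 1 - phi powr - \<eta>"
  have \<theta>: "0 < \<theta>" using phi_powr_margin[OF \<eta>] unfolding \<theta>_def by auto
  note cd = log_dotw_succ_block[OF s bs, folded c_def d_def]
  have "0 < phi ^ (s + 2) / sqrt 5" using phi_gt_1 by simp
  then have m: "real m > 0" using large(2) by linarith
  have "log phi (phi ^ (s + 1 + 1) / sqrt 5) \<le> log phi (real m)"
    using large(2) m phi_gt_1 by (subst log_le_cancel_iff) auto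
  then have y1: "1 \<le> y"
    using log_phi_binet_scale[of s 1] unfolding y_def zeck_log_def by simp
  \<comment> \<open>N is the number of Zeckendorf digits of m after its leading block\<close>
  define N where "N = \<lfloor>y - c - \<eta>\<rfloor>"
  have "frac (y - c - \<eta>) = y - c - \<eta> - N" unfolding N_def frac_def by simp
  then have N: "c + \<eta> + N \<le> y" "y < d - \<eta> + N"
    using frac_ge_0[of "y - c - \<eta>"] window cd unfolding y_def c_def by linarith+
  then have "N \<ge> 0" using y1 cd \<eta> by linarith
  define n where "n = nat N"
  have n: "real n = N" unfolding n_def using \<open>N \<ge> 0\<close> by simp
  define X where "X = phi ^ (s + n + 1) / sqrt 5"
  have "log phi (real m) < log phi (phi ^ (s + (n + 1) + 1) / sqrt 5)"
    using N cd \<eta> n log_phi_binet_scale[of s "n + 1"] unfolding y_def zeck_log_def by simp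
  then have "real m < phi * X"
    using m phi_gt_1 unfolding X_def by (simp add: algebra_simps)
  then have "real m * \<theta> \<le> phi * X * \<theta>" using \<theta> by simp
  then have "phi * (2 * real s) \<le> phi * (X * \<theta>)"
    using large(1) unfolding \<theta>_def[symmetric] by (simp add: algebra_simps)
  then have "real s \<le> X * \<theta>" using phi_gt_1 by simp
  then show ?thesis
    using LB_of_log_window[OF s bs, of m n \<eta>] m N n unfolding X_def \<theta>_def y_def c_def d_def by simp
qed

lemma frac_window_of_LB:
  assumes s: "s \<ge> 2" and bs: "bs \<in> Fs s" and \<eta>: "\<eta> > 0"
    and large: "2 * real s * phi \<le> real m * (1 - phi powr - \<eta>)" and LB: "LB s m = Some bs"
  shows "frac (zeck_log s m - log phi (dotw bs) + \<eta>)
           < log phi (dotw (succ_block s bs) / dotw bs) + 2 * \<eta>"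
proof -
  let ?sc = "succ_block s bs"
  define y where "y = zeck_log s m - log phi (dotw bs) + \<eta>"
  define \<theta> where "\<theta> = 1 - phi powr - \<eta>"
  note P = succ_block_props[OF s bs]
  have \<theta>: "0 < \<theta>" "\<theta> < 1" using phi_powr_margin[OF \<eta>] unfolding \<theta>_def by auto
  have "0 < 2 * real s * phi" using s phi_gt_1 by simp
  then have "0 < real m * \<theta>" using large unfolding \<theta>_def[symmetric] by linarith
  then have m: "real m > 0" using \<theta> by (simp add: zero_less_mult_iff)
  obtain n where n: "zval (bs @ replicate n 0) \<le> m" "m < zval (?sc @ replicate n 0)"
    using interval_of_LB[OF s bs _ LB] m by auto
  define X where "X = phi ^ (s + n + 1) / sqrt 5"
  have "real (zval (?sc @ replicate n 0)) \<le> X * dotw ?sc + s"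
    using zval_padded_approx[of ?sc n] P unfolding X_def by (simp add: abs_le_iff)
  moreover have "X * dotw ?sc \<le> X * phi"
    using P phi_gt_1 unfolding X_def by (intro mult_left_mono) auto
  ultimately have "(real m - s) * \<theta> < X * phi * \<theta>"
    using n(2) \<theta> by (intro mult_strict_right_mono) auto
  moreover have "real s * \<theta> \<le> real s * phi"
    using \<theta> phi_gt_1 by (intro mult_left_mono) auto
  ultimately have "phi * real s < phi * (X * \<theta>)"
    using large unfolding \<theta>_def[symmetric] by (simp add: algebra_simps)
  then have "real s \<le> X * \<theta>" using phi_gt_1 by simp
  then have "0 \<le> y - n" "y - n < log phi (dotw ?sc / dotw bs) + 2 * \<eta>"
    using log_window_of_interval[OF s bs _ n] log_dotw_succ_block[OF s bs]
    unfolding X_def \<theta>_def y_def by (simp_all add: algebra_simps)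
  moreover have "int n \<le> \<lfloor>y\<rfloor>" using calculation(1) by (simp add: le_floor_iff)
  then have "frac y \<le> y - n" unfolding frac_def by linarith
  ultimately show ?thesis unfolding y_def by linarith
qed

lemma eventually_LB_frac_windows:
  assumes s: "s \<ge> 2" and bs: "bs \<in> Fs s" and \<eta>: "\<eta> > 0"
  defines "L \<equiv> log phi (dotw (succ_block s bs) / dotw bs)"
  shows "\<forall>\<^sub>F m in sequentially.
           (frac (zeck_log s m - log phi (dotw bs) - \<eta>) < L - 2 * \<eta> \<longrightarrow> LB s m = Some bs)
         \<and> (LB s m = Some bs \<longrightarrow> frac (zeck_log s m - log phi (dotw bs) + \<eta>) < L + 2 * \<eta>)"
proof -
  define \<theta> where "\<theta> = 1 - phi powr - \<eta>"
  have \<theta>: "0 < \<theta>" using phi_powr_margin[OF \<eta>] unfolding \<theta>_def by auto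
  have "\<forall>\<^sub>F m in sequentially. max (2 * real s * phi / \<theta>) (phi ^ (s + 2) / sqrt 5) \<le> real m"
    using filterlim_real_sequentially unfolding filterlim_at_top by blast
  then show ?thesis
  proof eventually_elim
    case (elim m)
    then have "2 * real s * phi \<le> real m * \<theta>" "phi ^ (s + 2) / sqrt 5 \<le> real m"
      using \<theta> by (simp_all add: field_simps)
    then show ?case
      using LB_of_frac_window[OF s bs \<eta>] frac_window_of_LB[OF s bs \<eta>]
      unfolding L_def \<theta>_def by blast
  qed
qed

section \<open>Equidistribution of irrational rotations\<close>

lemma frac_add_le:
  fixes u t :: real
  assumes "0 \<le> t"
  shows "frac (u + t) \<le> frac u + t"
proof -
  have "real_of_int \<lfloor>u\<rfloor> \<le> real_of_int \<lfloor>u + t\<rfloor>"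
    using assms by (simp add: floor_mono)
  then show ?thesis unfolding frac_def by linarith
qed

lemma indicator_frac_less_eq_floor_diff:
  assumes "0 \<le> L" "L \<le> 1"
  shows "(if frac y < L then 1 else 0 :: real) = real_of_int (\<lfloor>y\<rfloor> - \<lfloor>y - L\<rfloor>)"
proof -
  have y: "y = of_int \<lfloor>y\<rfloor> + frac y" by (simp add: frac_def)
  have "\<lfloor>y - L\<rfloor> = (if frac y < L then \<lfloor>y\<rfloor> - 1 else \<lfloor>y\<rfloor>)"
    by (rule floor_unique) (use assms y frac_lt_1[of y] frac_ge_0[of y] in \<open>auto; linarith\<close>)+
  then show ?thesis by simp
qed

lemma card_frac_less_eq_sum_floor_diff:
  fixes x :: "nat \<Rightarrow> real"
  assumes "0 \<le> L" "L \<le> 1"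
  shows "real (card {k \<in> {1..n}. frac (x k) < L}) = (\<Sum>k=1..n. real_of_int (\<lfloor>x k\<rfloor> - \<lfloor>x k - L\<rfloor>))"
proof -
  have "real (card {k \<in> {1..n}. frac (x k) < L}) = (\<Sum>k\<in>{k \<in> {1..n}. frac (x k) < L}. 1)"
    by simp
  also have "\<dots> = (\<Sum>k=1..n. if frac (x k) < L then 1 else 0)"
    by (rule sum.inter_filter) simp
  also have "\<dots> = (\<Sum>k=1..n. real_of_int (\<lfloor>x k\<rfloor> - \<lfloor>x k - L\<rfloor>))"
    using indicator_frac_less_eq_floor_diff[OF assms] by simp
  finally show ?thesis .
qed

lemma abs_sum_shift_diff_le:
  fixes g :: "int \<Rightarrow> real"
  assumes "\<And>t. -1 \<le> g t \<and> g t \<le> 0"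
  shows "\<bar>\<Sum>k=1..n. g (int k) - g (int k - int M)\<bar> \<le> real M"
proof -
  have "(\<Sum>k=1..n. g (int k) - g (int k - int M)) = (\<Sum>i<M. g (int n - int i)) - (\<Sum>i<M. g (- int i))"
  proof (induction n)
    case (Suc n)
    have "(\<Sum>i<M. g (int (Suc n) - int i)) - (\<Sum>i<M. g (int n - int i))
        = (\<Sum>i<M. g (int (Suc n) - int i) - g (int (Suc n) - int (Suc i)))"
      by (simp add: sum_subtractf)
    also have "\<dots> = g (int (Suc n)) - g (int (Suc n) - int M)"
      using sum_lessThan_telescope'[of "\<lambda>i. g (int (Suc n) - int i)" M] by simp
    finally show ?case using Suc by simp
  qed simp
  moreover have bounds: "- real M \<le> (\<Sum>i<M. g (f i))" "(\<Sum>i<M. g (f i)) \<le> 0" for f :: "nat \<Rightarrow> int"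
    using sum_mono[of "{..<M}" "\<lambda>_. -1" "\<lambda>i. g (f i)"] sum_mono[of "{..<M}" "\<lambda>i. g (f i)" "\<lambda>_. 0"]
      assms by auto
  ultimately show ?thesis
    using bounds[of "\<lambda>i. int n - int i"] bounds[of "\<lambda>i. - int i"] unfolding abs_le_iff by linarith
qed

text \<open>Since q \<alpha> = p + \<delta>, shifting k by j q moves k \<alpha> + \<beta> by j \<delta> modulo an integer, so
  the floor differences telescope.\<close>

lemma sum_floor_shift_approx:
  fixes \<alpha> \<beta> \<delta> :: real and p :: int and q j :: nat
  assumes q\<alpha>: "real q * \<alpha> = real_of_int p + \<delta>"
  shows "\<bar>(\<Sum>k=1..n. real_of_int (\<lfloor>real k * \<alpha> + \<beta>\<rfloor> - \<lfloor>real k * \<alpha> + \<beta> - real j * \<delta>\<rfloor>))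
          - real n * real j * \<delta>\<bar> \<le> real (j * q)"
proof -
  define G where "G t = real_of_int \<lfloor>real_of_int t * \<alpha> + \<beta>\<rfloor> - (real_of_int t * \<alpha> + \<beta>)" for t :: int
  have G: "-1 \<le> G t \<and> G t \<le> 0" for t
    unfolding G_def by linarith
  have "real_of_int (\<lfloor>real k * \<alpha> + \<beta>\<rfloor> - \<lfloor>real k * \<alpha> + \<beta> - real j * \<delta>\<rfloor>)
      = G (int k) - G (int k - int (j * q)) + real j * \<delta>" for k :: nat
  proof -
    have j\<delta>: "real j * \<delta> = real j * real q * \<alpha> - real j * real_of_int p"
      using arg_cong[OF q\<alpha>, of "(*) (real j)"] by (simp add: algebra_simps)
    have "real k * \<alpha> + \<beta> - real j * \<delta>
        = real_of_int (int k - int (j * q)) * \<alpha> + \<beta> + real_of_int (int j * p)"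
      using j\<delta> by (simp add: algebra_simps)
    then have "\<lfloor>real k * \<alpha> + \<beta> - real j * \<delta>\<rfloor>
        = \<lfloor>real_of_int (int k - int (j * q)) * \<alpha> + \<beta>\<rfloor> + int j * p"
      by (simp only: floor_add_int)
    then show ?thesis
      unfolding G_def using j\<delta> by (simp add: algebra_simps)
  qed
  then have "(\<Sum>k=1..n. real_of_int (\<lfloor>real k * \<alpha> + \<beta>\<rfloor> - \<lfloor>real k * \<alpha> + \<beta> - real j * \<delta>\<rfloor>))
      = (\<Sum>k=1..n. G (int k) - G (int k - int (j * q))) + real n * real j * \<delta>"
    by (simp add: sum.distrib)
  then show ?thesis
    using abs_sum_shift_diff_le[where g = G and n = n and M = "j * q"] G by simp
qed

lemma LIMSEQ_div_of_linear_approx: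
  fixes a :: "nat \<Rightarrow> real"
  assumes "\<And>\<delta>. \<delta> > 0 \<Longrightarrow> \<exists>C. \<forall>n. \<bar>a n - real n * L\<bar> \<le> real n * \<delta> + C"
  shows "(\<lambda>n. a n / real n) \<longlonglongrightarrow> L"
proof (rule LIMSEQ_I)
  fix r :: real
  assume r: "r > 0"
  then obtain C where C: "\<And>n. \<bar>a n - real n * L\<bar> \<le> real n * (r / 2) + C"
    using assms[of "r / 2"] by auto
  show "\<exists>no. \<forall>n\<ge>no. norm (a n / real n - L) < r"
  proof (intro exI allI impI)
    fix n
    assume "nat \<lceil>2 * \<bar>C\<bar> / r\<rceil> + 1 \<le> n"
    then have n: "real n > 0" "2 * \<bar>C\<bar> / r < real n" by linarith+
    then have "\<bar>C\<bar> < real n * (r / 2)" using r by (simp add: field_simps)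
    then have "\<bar>a n - real n * L\<bar> < real n * r" using C[of n] by linarith
    then have "\<bar>a n - real n * L\<bar> / real n < r"
      using n(1) by (subst pos_divide_less_eq) (simp_all add: mult.commute)
    moreover have "a n / real n - L = (a n - real n * L) / real n" using n by (simp add: field_simps)
    ultimately show "norm (a n / real n - L) < r"
      using n by (simp add: abs_divide)
  qed
qed

lemma card_rotation_window_approx:
  fixes \<alpha> \<beta> \<delta> L :: real and p :: int and q n :: nat
  assumes q\<alpha>: "real q * \<alpha> = real_of_int p + \<delta>" and \<delta>: "\<delta> > 0" and L: "0 \<le> L" "L \<le> 1"
  shows "\<bar>real (card {k \<in> {1..n}. frac (real k * \<alpha> + \<beta>) < L}) - real n * L\<bar>
           \<le> real n * \<delta> + real ((nat \<lfloor>L / \<delta>\<rfloor> + 1) * q)"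
proof -
  define m where "m = nat \<lfloor>L / \<delta>\<rfloor>"
  have "real m = \<lfloor>L / \<delta>\<rfloor>" unfolding m_def using L \<delta> by simp
  then have "real m \<le> L / \<delta>" "L / \<delta> < real m + 1" by linarith+
  then have m: "real m * \<delta> \<le> L" "L < (real m + 1) * \<delta>" using \<delta> by (simp_all add: field_simps)
  define x where "x k = real k * \<alpha> + \<beta>" for k :: nat
  define S where "S j = (\<Sum>k=1..n. real_of_int (\<lfloor>x k\<rfloor> - \<lfloor>x k - real j * \<delta>\<rfloor>))" for j :: nat
  have S: "\<bar>S j - real n * real j * \<delta>\<bar> \<le> real (j * q)" for j
    unfolding S_def x_def by (rule sum_floor_shift_approx[OF q\<alpha>])
  let ?c = "\<Sum>k=1..n. real_of_int (\<lfloor>x k\<rfloor> - \<lfloor>x k - L\<rfloor>)"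
  have "S m \<le> ?c" "?c \<le> S (m + 1)"
    unfolding S_def using m by (auto intro!: sum_mono floor_mono simp: algebra_simps)
  moreover have "real n * (L - \<delta>) \<le> real n * (real m * \<delta>)"
    using m by (intro mult_left_mono) (simp_all add: algebra_simps)
  moreover have "real n * (real (m + 1) * \<delta>) \<le> real n * (L + \<delta>)"
    using m by (intro mult_left_mono) (simp_all add: algebra_simps)
  ultimately show ?thesis
    using S[of m] S[of "m + 1"] card_frac_less_eq_sum_floor_diff[OF L, where x = x and n = n]
    unfolding x_def m_def[symmetric] by (simp add: abs_le_iff algebra_simps)
qed

lemma rotation_density:
  fixes \<alpha> \<beta> L :: real
  assumes irr: "\<alpha> \<notin> \<rat>" and L: "0 \<le> L" "L \<le> 1"
  shows "(\<lambda>n. real (card {k \<in> {1..n}. frac (real k * \<alpha> + \<beta>) < L}) / real n) \<longlonglongrightarrow> L"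
proof (rule LIMSEQ_div_of_linear_approx)
  fix \<epsilon> :: real
  assume "\<epsilon> > 0"
  define e where "e = min \<epsilon> 1 / 2"
  have e: "0 < e" "e \<le> 1" using \<open>\<epsilon> > 0\<close> unfolding e_def by auto
  obtain q where "\<bar>frac (real q * \<alpha>) - e\<bar> < e"
    using Kronecker_approx_1_explicit[OF irr, of e e] e by auto
  define \<delta> where "\<delta> = frac (real q * \<alpha>)"
  have "0 < \<delta>" "\<delta> < 2 * e"
    using \<open>\<bar>frac (real q * \<alpha>) - e\<bar> < e\<close> unfolding \<delta>_def abs_less_iff by linarith+
  then have \<delta>: "0 < \<delta>" "\<delta> \<le> \<epsilon>" unfolding e_def by auto
  have "real q * \<alpha> = real_of_int \<lfloor>real q * \<alpha>\<rfloor> + \<delta>" unfolding \<delta>_def frac_def by simp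
  then have "\<bar>real (card {k \<in> {1..n}. frac (real k * \<alpha> + \<beta>) < L}) - real n * L\<bar>
      \<le> real n * \<epsilon> + real ((nat \<lfloor>L / \<delta>\<rfloor> + 1) * q)" for n
    using card_rotation_window_approx[of q \<alpha> _ \<delta> L n \<beta>] mult_left_mono[OF \<delta>(2), of "real n"] \<delta> L
    by fastforce
  then show "\<exists>C. \<forall>n. \<bar>real (card {k \<in> {1..n}. frac (real k * \<alpha> + \<beta>) < L}) - real n * L\<bar>
                  \<le> real n * \<epsilon> + C"
    by blast
qed

section \<open>Densities\<close>

lemma card_le_card_plus_of_eventually:
  assumes "\<And>k. k \<ge> k0 \<Longrightarrow> Q k \<Longrightarrow> R k"
  shows "card {k \<in> {1..n}. Q k} \<le> card {k \<in> {1..n}. R k} + k0"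
proof -
  have "{k \<in> {1..n}. Q k} \<subseteq> {k \<in> {1..n}. R k} \<union> {..<k0}"
    using assms by (auto simp: not_less)
  then have "card {k \<in> {1..n}. Q k} \<le> card ({k \<in> {1..n}. R k} \<union> {..<k0})"
    by (intro card_mono) auto
  also have "\<dots> \<le> card {k \<in> {1..n}. R k} + k0"
    using card_Un_le[of "{k \<in> {1..n}. R k}" "{..<k0}"] by simp
  finally show ?thesis .
qed

lemma density_squeeze:
  fixes P :: "nat \<Rightarrow> bool" and L :: real
  assumes "\<And>\<epsilon>. \<epsilon> > 0 \<Longrightarrow> \<exists>Lo Up. (\<forall>\<^sub>F k in sequentially. (Lo k \<longrightarrow> P k) \<and> (P k \<longrightarrow> Up k))
      \<and> (\<forall>\<^sub>F n in sequentially. L - \<epsilon> < real (card {k \<in> {1..n}. Lo k}) / real n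
                                 \<and> real (card {k \<in> {1..n}. Up k}) / real n < L + \<epsilon>)"
  shows "(\<lambda>n. real (card {k \<in> {1..n}. P k}) / real n) \<longlonglongrightarrow> L"
proof (rule tendstoI)
  fix r :: real
  assume "r > 0"
  then obtain Lo Up where ev: "\<forall>\<^sub>F k in sequentially. (Lo k \<longrightarrow> P k) \<and> (P k \<longrightarrow> Up k)"
    and dens: "\<forall>\<^sub>F n in sequentially. L - r / 2 < real (card {k \<in> {1..n}. Lo k}) / real n
                                 \<and> real (card {k \<in> {1..n}. Up k}) / real n < L + r / 2"
    using assms[of "r / 2"] by auto
  obtain k0 where k0: "\<And>k. k \<ge> k0 \<Longrightarrow> (Lo k \<longrightarrow> P k) \<and> (P k \<longrightarrow> Up k)"
    using ev unfolding eventually_sequentially by blast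
  have "\<forall>\<^sub>F n in sequentially. real k0 / real n < r / 2"
    using lim_const_over_n[of "real k0"] \<open>r > 0\<close> by (intro order_tendstoD(2)) auto
  then show "\<forall>\<^sub>F n in sequentially. dist (real (card {k \<in> {1..n}. P k}) / real n) L < r"
    using dens eventually_ge_at_top[of 1]
  proof eventually_elim
    case (elim n)
    have "real (card {k \<in> {1..n}. Lo k}) \<le> real (card {k \<in> {1..n}. P k}) + real k0"
      "real (card {k \<in> {1..n}. P k}) \<le> real (card {k \<in> {1..n}. Up k}) + real k0"
      using card_le_card_plus_of_eventually[of k0, where n = n] k0 by (metis of_nat_add of_nat_le_iff)+
    then have "real (card {k \<in> {1..n}. Lo k}) / real n \<le> real (card {k \<in> {1..n}. P k}) / real n + real k0 / real n"
      "real (card {k \<in> {1..n}. P k}) / real n \<le> real (card {k \<in> {1..n}. Up k}) / real n + real k0 / real n"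
      using elim(3) by (simp_all add: add_divide_distrib[symmetric] divide_right_mono)
    then show ?case
      using elim(1,2) unfolding dist_real_def abs_less_iff by linarith
  qed
qed

lemma eventually_rotation_window_sandwich:
  fixes y :: "nat \<Rightarrow> real" and P :: "nat \<Rightarrow> bool"
  assumes y: "(\<lambda>k. y k - (real k * \<alpha> + \<beta>)) \<longlonglongrightarrow> 0" and \<eta>: "\<eta> > 0"
    and lo: "\<forall>\<^sub>F k in sequentially. frac (y k - \<eta>) < L - 2 * \<eta> \<longrightarrow> P k"
    and up: "\<forall>\<^sub>F k in sequentially. P k \<longrightarrow> frac (y k + \<eta>) < L + 2 * \<eta>"
  shows "\<forall>\<^sub>F k in sequentially. (frac (real k * \<alpha> + (\<beta> - 2 * \<eta>)) < L - 4 * \<eta> \<longrightarrow> P k)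
           \<and> (P k \<longrightarrow> frac (real k * \<alpha> + (\<beta> + 2 * \<eta>)) < min (L + 4 * \<eta>) 1)"
proof -
  have "\<forall>\<^sub>F k in sequentially. \<bar>y k - (real k * \<alpha> + \<beta>)\<bar> < \<eta>"
    using tendstoD[OF y \<eta>] by (simp add: dist_real_def)
  then show ?thesis
    using lo up
  proof eventually_elim
    case (elim k)
    define d where "d = y k - (real k * \<alpha> + \<beta>)"
    have "frac (y k - \<eta>) = frac ((real k * \<alpha> + (\<beta> - 2 * \<eta>)) + (\<eta> + d))"
      unfolding d_def by (simp add: algebra_simps)
    also have "\<dots> \<le> frac (real k * \<alpha> + (\<beta> - 2 * \<eta>)) + (\<eta> + d)"
      using elim(1) unfolding d_def by (intro frac_add_le) simp
    finally have lower: "frac (y k - \<eta>) \<le> frac (real k * \<alpha> + (\<beta> - 2 * \<eta>)) + (\<eta> + d)" .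
    have "frac (real k * \<alpha> + (\<beta> + 2 * \<eta>)) = frac ((y k + \<eta>) + (\<eta> - d))"
      unfolding d_def by (simp add: algebra_simps)
    also have "\<dots> \<le> frac (y k + \<eta>) + (\<eta> - d)"
      using elim(1) unfolding d_def by (intro frac_add_le) simp
    finally have upper: "frac (real k * \<alpha> + (\<beta> + 2 * \<eta>)) \<le> frac (y k + \<eta>) + (\<eta> - d)" .
    show ?case
      using elim lower upper frac_lt_1 unfolding d_def by auto
  qed
qed

lemma density_of_perturbed_rotation_window:
  fixes y :: "nat \<Rightarrow> real" and P :: "nat \<Rightarrow> bool"
  assumes irr: "\<alpha> \<notin> \<rat>" and y: "(\<lambda>k. y k - (real k * \<alpha> + \<beta>)) \<longlonglongrightarrow> 0"
    and L: "0 < L" "L \<le> 1"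
    and lo: "\<And>\<eta>. \<eta> > 0 \<Longrightarrow> \<forall>\<^sub>F k in sequentially. frac (y k - \<eta>) < L - 2 * \<eta> \<longrightarrow> P k"
    and up: "\<And>\<eta>. \<eta> > 0 \<Longrightarrow> \<forall>\<^sub>F k in sequentially. P k \<longrightarrow> frac (y k + \<eta>) < L + 2 * \<eta>"
  shows "(\<lambda>n. real (card {k \<in> {1..n}. P k}) / real n) \<longlonglongrightarrow> L"
proof (rule density_squeeze)
  fix \<epsilon> :: real
  assume "\<epsilon> > 0"
  define \<eta> where "\<eta> = min \<epsilon> L / 8"
  have \<eta>: "0 < \<eta>" "4 * \<eta> < \<epsilon>" "4 * \<eta> \<le> L" using \<open>\<epsilon> > 0\<close> L unfolding \<eta>_def by auto
  define Lo where "Lo k \<longleftrightarrow> frac (real k * \<alpha> + (\<beta> - 2 * \<eta>)) < L - 4 * \<eta>" for k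
  define Up where "Up k \<longleftrightarrow> frac (real k * \<alpha> + (\<beta> + 2 * \<eta>)) < min (L + 4 * \<eta>) 1" for k
  have "\<forall>\<^sub>F k in sequentially. (Lo k \<longrightarrow> P k) \<and> (P k \<longrightarrow> Up k)"
    using eventually_rotation_window_sandwich[OF y \<eta>(1) lo[OF \<eta>(1)] up[OF \<eta>(1)]]
    unfolding Lo_def Up_def .
  moreover have "(\<lambda>n. real (card {k \<in> {1..n}. Lo k}) / real n) \<longlonglongrightarrow> L - 4 * \<eta>"
    unfolding Lo_def using \<eta> L by (intro rotation_density[OF irr]) auto
  then have "\<forall>\<^sub>F n in sequentially. L - \<epsilon> < real (card {k \<in> {1..n}. Lo k}) / real n"
    using \<eta> by (intro order_tendstoD(1)) auto
  moreover have "(\<lambda>n. real (card {k \<in> {1..n}. Up k}) / real n) \<longlonglongrightarrow> min (L + 4 * \<eta>) 1"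
    unfolding Up_def using \<eta> L by (intro rotation_density[OF irr]) auto
  then have "\<forall>\<^sub>F n in sequentially. real (card {k \<in> {1..n}. Up k}) / real n < L + \<epsilon>"
    using \<eta> by (intro order_tendstoD(2)) auto
  ultimately show "\<exists>Lo Up. (\<forall>\<^sub>F k in sequentially. (Lo k \<longrightarrow> P k) \<and> (P k \<longrightarrow> Up k))
      \<and> (\<forall>\<^sub>F n in sequentially. L - \<epsilon> < real (card {k \<in> {1..n}. Lo k}) / real n
                                 \<and> real (card {k \<in> {1..n}. Up k}) / real n < L + \<epsilon>)"
    by (intro exI[of _ Lo] exI[of _ Up]) (simp add: eventually_conj_iff)
qed

lemma base_gt_1_of_asymp:
  fixes K :: "nat \<Rightarrow> nat" and a b :: real
  assumes Kpos: "\<forall>n\<ge>1. K n > 0" and "a > 0" "b > 0" "b \<noteq> 1"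
    and asym: "(\<lambda>n. real (K n) / (a * b ^ n)) \<longlonglongrightarrow> 1"
  shows "b > 1"
proof (rule ccontr)
  assume "\<not> b > 1"
  then have "(\<lambda>n. real (K n) / (a * b ^ n) * (a * b ^ n)) \<longlonglongrightarrow> 1 * (a * 0)"
    using assms by (intro tendsto_intros asym) auto
  moreover have "real (K n) / (a * b ^ n) * (a * b ^ n) = real (K n)" for n
    using assms by simp
  ultimately have "\<forall>\<^sub>F n in sequentially. real (K n) < 1"
    by (intro order_tendstoD(2)) auto
  then have "\<forall>\<^sub>F n in sequentially. False"
    using eventually_ge_at_top[of 1] by eventually_elim (use Kpos in fastforce)
  then show False by simp
qed

lemma filterlim_at_top_of_asymp:
  fixes K :: "nat \<Rightarrow> nat" and a b :: real
  assumes "a > 0" "b > 1" and asym: "(\<lambda>n. real (K n) / (a * b ^ n)) \<longlonglongrightarrow> 1"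
  shows "filterlim K at_top sequentially"
proof -
  have "filterlim (\<lambda>n. norm (b ^ n)) at_top sequentially"
    using assms filterlim_realpow_sequentially_gt1[of b]
    unfolding filterlim_at_infinity_conv_norm_at_top by simp
  then have "filterlim (\<lambda>n. b ^ n) at_top sequentially"
    using assms by (simp add: norm_power)
  then have "filterlim (\<lambda>n. a * b ^ n) at_top sequentially"
    using assms by (intro filterlim_tendsto_pos_mult_at_top[OF tendsto_const]) auto
  then have "filterlim (\<lambda>n. real (K n) / (a * b ^ n) * (a * b ^ n)) at_top sequentially"
    by (intro filterlim_tendsto_pos_mult_at_top[OF asym]) auto
  moreover have "real (K n) / (a * b ^ n) * (a * b ^ n) = real (K n)" for n
    using assms by simp
  ultimately have "filterlim (\<lambda>n. real (K n)) at_top sequentially"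
    by simp
  then have "\<forall>\<^sub>F n in sequentially. real Z \<le> real (K n)" for Z
    unfolding filterlim_at_top by blast
  then show ?thesis
    unfolding filterlim_at_top by simp
qed

lemma log_asymp_of_asymp:
  fixes K :: "nat \<Rightarrow> nat" and a b B :: real
  assumes Kpos: "\<forall>n\<ge>1. K n > 0" and "a > 0" "b > 0" "B > 1"
    and asym: "(\<lambda>n. real (K n) / (a * b ^ n)) \<longlonglongrightarrow> 1"
  shows "(\<lambda>n. log B (real (K n)) - (real n * log B b + log B a)) \<longlonglongrightarrow> 0"
proof -
  have "(\<lambda>n. log B (real (K n) / (a * b ^ n))) \<longlonglongrightarrow> log B 1"
    using assms by (intro tendsto_log[OF tendsto_const asym]) auto
  moreover have "\<forall>\<^sub>F n in sequentially.
      log B (real (K n) / (a * b ^ n)) = log B (real (K n)) - (real n * log B b + log B a)"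
    using eventually_ge_at_top[of 1]
  proof eventually_elim
    case (elim n)
    then show ?case
      using assms by (simp add: log_divide_pos log_mult_pos log_nat_power)
  qed
  ultimately show ?thesis
    by (simp add: tendsto_cong)
qed

theorem theorem3p8:
  fixes K :: "nat \<Rightarrow> nat" and a b :: real and s :: nat and bs :: "nat list"
  assumes Kpos: "\<forall>n\<ge>1. K n > 0"
    and apos: "a > 0" and bpos: "b > 0"
    and irr: "log phi b \<notin> \<rat>"
    and asym: "(\<lambda>n. real (K n) / (a * b ^ n)) \<longlonglongrightarrow> 1"
    and s2: "s \<ge> 2"
    and bsF: "bs \<in> Fs s"
  shows "(\<lambda>n. real (card {k \<in> {1..n}. LB s (K k) = Some bs}) / real n)
           \<longlonglongrightarrow> log phi (dotw (succ_block s bs) / dotw bs)"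
proof -
  define c where "c = log phi (dotw bs)"
  define \<beta> where "\<beta> = log phi a - log phi (phi ^ (s + 1) / sqrt 5) - c"
  have "b \<noteq> 1" using irr by auto
  then have "b > 1" using base_gt_1_of_asymp Kpos apos bpos asym by blast
  then have K: "filterlim K at_top sequentially" using filterlim_at_top_of_asymp apos asym by blast
  have y: "(\<lambda>k. (zeck_log s (K k) - c) - (real k * log phi b + \<beta>)) \<longlonglongrightarrow> 0"
    using log_asymp_of_asymp[OF Kpos apos bpos phi_gt_1 asym]
    unfolding zeck_log_def \<beta>_def by (simp add: algebra_simps)
  show ?thesis
  proof (rule density_of_perturbed_rotation_window[OF irr y log_succ_block_ratio_bounds[OF s2 bsF]])
    fix \<eta> :: real
    assume "\<eta> > 0"
    note windows = eventually_compose_filterlim[OF eventually_LB_frac_windows[OF s2 bsF this] K]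
    show "\<forall>\<^sub>F k in sequentially. frac (zeck_log s (K k) - c - \<eta>)
            < log phi (dotw (succ_block s bs) / dotw bs) - 2 * \<eta> \<longrightarrow> LB s (K k) = Some bs"
      using windows unfolding c_def by (rule eventually_mono) blast
    show "\<forall>\<^sub>F k in sequentially. LB s (K k) = Some bs
            \<longrightarrow> frac (zeck_log s (K k) - c + \<eta>) < log phi (dotw (succ_block s bs) / dotw bs) + 2 * \<eta>"
      using windows unfolding c_def by (rule eventually_mono) blast
  qed
qed

end
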